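(* Let $S$ be an inverse semigroup that is a separately Scott-continuous mirror semigroup, with semilattice of idempotents $\Sigma$. Then for all $s,t\in S$, $s \ll t$ if and only if $s\leqslant t$ and $\sigma(s) \prec\!\!\!\prec \sigma(t)$.
   Context: An inverse semigroup is a semigroup $S$ in which every $s$ has a unique $s^*$ with $ss^*s=s$ and $s^*ss^*=s^*$. $\Sigma=\Sigma(S)$ is the set of idempotents. The intrinsic order is $s\leqslant t$ iff $s=t\epsilon$ for some idempotent $\epsilon$. A subset is directed if nonempty and any two elements have an upper bound in it. $S$ is a mirror semigroup if every directed subset of $\Sigma$ having a supremum in $(\Sigma,\leqslant)$ also has a supremum in $(S,\leqslant)$. $S$ is separately Scott-continuous if for every directed $D\subseteq S$ with a supremum $\bigvee D$ in $S$ and every $s\in S$, $\bigvee(Ds)$ exists in $S$ and equals $(\bigvee D)s$. The source map is $\sigma(s)=s^*s$. In a poset, $x$ is way-below $y$ if for every directed subset $D$ that has a supremum with $y\leqslant \sup D$, there is $d\in D$ with $x\leqslant d$. $\ll$ denotes the way-below relation of the poset $(S,\leqslant)$ and $\prec\!\!\!\prec$ the way-below relation of the poset $(\Sigma,\leqslant)$. *)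

theory Defs
  imports Main
begin

definition inverse_semigroup :: "('a::semigroup_mult) itself \<Rightarrow> bool" where
  "inverse_semigroup _ \<longleftrightarrow>
     (\<forall>s::'a. \<exists>!u. s * u * s = s \<and> u * s * u = u)"

definition istar :: "'a::semigroup_mult \<Rightarrow> 'a" where
  "istar s = (THE u. s * u * s = s \<and> u * s * u = u)"

definition idems :: "'a::semigroup_mult set" where
  "idems = {e. e * e = e}"

definition ileq :: "'a::semigroup_mult \<Rightarrow> 'a \<Rightarrow> bool" where
  "ileq s t \<longleftrightarrow> (\<exists>e\<in>idems. s = t * e)"

definition src :: "'a::semigroup_mult \<Rightarrow> 'a" where
  "src s = istar s * s"

definition directed_in :: "('a \<Rightarrow> 'a \<Rightarrow> bool) \<Rightarrow> 'a set \<Rightarrow> 'a set \<Rightarrow> bool" where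
  "directed_in le P D \<longleftrightarrow> D \<subseteq> P \<and> D \<noteq> {} \<and>
     (\<forall>x\<in>D. \<forall>y\<in>D. \<exists>z\<in>D. le x z \<and> le y z)"

definition is_sup_in :: "('a \<Rightarrow> 'a \<Rightarrow> bool) \<Rightarrow> 'a set \<Rightarrow> 'a set \<Rightarrow> 'a \<Rightarrow> bool" where
  "is_sup_in le P D x \<longleftrightarrow> x \<in> P \<and> (\<forall>d\<in>D. le d x) \<and>
     (\<forall>y\<in>P. (\<forall>d\<in>D. le d y) \<longrightarrow> le x y)"

definition has_sup_in :: "('a \<Rightarrow> 'a \<Rightarrow> bool) \<Rightarrow> 'a set \<Rightarrow> 'a set \<Rightarrow> bool" where
  "has_sup_in le P D \<longleftrightarrow> (\<exists>x. is_sup_in le P D x)"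

definition way_below_in :: "('a \<Rightarrow> 'a \<Rightarrow> bool) \<Rightarrow> 'a set \<Rightarrow> 'a \<Rightarrow> 'a \<Rightarrow> bool" where
  "way_below_in le P x y \<longleftrightarrow>
     (\<forall>D z. directed_in le P D \<longrightarrow> is_sup_in le P D z \<longrightarrow> le y z \<longrightarrow>
        (\<exists>d\<in>D. le x d))"

definition mirror_semigroup :: "('a::semigroup_mult) itself \<Rightarrow> bool" where
  "mirror_semigroup _ \<longleftrightarrow>
     (\<forall>D::'a set. directed_in ileq idems D \<longrightarrow> has_sup_in ileq idems D \<longrightarrow>
        has_sup_in ileq UNIV D)"

definition sep_scott_cont :: "('a::semigroup_mult) itself \<Rightarrow> bool" where
  "sep_scott_cont _ \<longleftrightarrow>
     (\<forall>(D::'a set) x s. directed_in ileq UNIV D \<longrightarrow> is_sup_in ileq UNIV D x \<longrightarrow>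
        is_sup_in ileq UNIV ((\<lambda>d. d * s) ` D) (x * s))"

end

theory Submission
  imports Defs
begin

text \<open>Below a common upper bound z, an element d is recovered from its source as d = z src(d),
  and src(d) = z* d. So for a directed D with supremum z, left Scott-continuity (obtained from the
  right one through the involution) makes src(D) = z* D directed with supremum src(z), and s \<le> d
  follows as soon as src(s) \<le> src(d); this proves that the two conditions imply s \<ll> t.
  Conversely, in a mirror semigroup a directed set of idempotents with supremum z in \<Sigma> has the
  same supremum in S, so t D is directed with supremum t z \<ge> t when src(t) \<le> z, and the
  inequality src(t e) \<le> e transfers s \<le> t e back to src(s) \<le> e.\<close>

lemma ileqI: "e * e = e \<Longrightarrow> s = t * e \<Longrightarrow> ileq s t"
  unfolding ileq_def idems_def by blast

lemma ileqE:
  assumes "ileq s t"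
  obtains e where "e * e = e" "s = t * e"
  using assms unfolding ileq_def idems_def by blast

lemma directed_in_image:
  assumes "directed_in le P D" "\<And>x y. le x y \<Longrightarrow> le' (f x) (f y)" "f ` D \<subseteq> Q"
  shows "directed_in le' Q (f ` D)"
  unfolding directed_in_def
proof (intro conjI ballI)
  fix a b assume "a \<in> f ` D" "b \<in> f ` D"
  then obtain x y where "x \<in> D" "y \<in> D" "a = f x" "b = f y"
    by blast
  then obtain z where "z \<in> D" "le x z" "le y z"
    using assms(1) unfolding directed_in_def by blast
  with \<open>a = f x\<close> \<open>b = f y\<close> show "\<exists>c\<in>f ` D. le' a c \<and> le' b c"
    using assms(2) by blast
qed (use assms in \<open>auto simp: directed_in_def\<close>)

lemma is_sup_in_subset: "is_sup_in le P D x \<Longrightarrow> Q \<subseteq> P \<Longrightarrow> x \<in> Q \<Longrightarrow> is_sup_in le Q D x"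
  unfolding is_sup_in_def by blast

context
  assumes inv: "inverse_semigroup TYPE('a::semigroup_mult)"
begin

lemma ex1_inverse: "\<exists>!u. (s::'a) * u * s = s \<and> u * s * u = u"
  using inv unfolding inverse_semigroup_def by blast

lemma istar_inverse: "(s::'a) * istar s * s = s" "istar s * s * istar s = istar s"
  using theI'[OF ex1_inverse, of s] unfolding istar_def by auto

lemma istar_inverse_assoc:
  "(s::'a) * (istar s * s) = s" "s * (istar s * (s * z)) = s * z"
  "istar s * (s * istar s) = istar s" "istar s * (s * (istar s * z)) = istar s * z"
  using istar_inverse[of s] by (simp_all add: mult.assoc[symmetric])

lemma istar_eqI: "(s::'a) * u * s = s \<Longrightarrow> u * s * u = u \<Longrightarrow> istar s = u"
  unfolding istar_def by (rule the1_equality[OF ex1_inverse]) simp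

lemma istar_istar [simp]: "istar (istar (s::'a)) = s"
  by (rule istar_eqI) (use istar_inverse in auto)

lemma istar_idem: "(e::'a) * e = e \<Longrightarrow> istar e = e"
  by (rule istar_eqI) auto

lemma idem_assoc: "(e::'a) * e = e \<Longrightarrow> e * (e * z) = e * z"
  by (simp add: mult.assoc[symmetric])

lemma idem_mult_idem:
  assumes a: "(a::'a) * a = a" and b: "b * b = b"
  shows "a * b * (a * b) = a * b"
proof -
  define x where "x = istar (a * b)"
  have x1: "a * (b * (x * (a * b))) = a * b" and x2: "x * (a * (b * x)) = x"
    using istar_inverse[of "a * b"] unfolding x_def by (simp_all add: mult.assoc)
  have x2z: "x * (a * (b * (x * z))) = x * z" for z
    using x2 by (metis mult.assoc)
  \<comment> \<open>b x a is also an inverse of a b, so by uniqueness x = b x a, which makes x idempotent\<close>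
  have "istar (a * b) = b * x * a"
    by (rule istar_eqI) (simp_all add: mult.assoc idem_assoc a b x1 x2 x2z)
  hence x_eq: "x = b * x * a"
    unfolding x_def by simp
  have "x * x = b * (x * (a * (b * x))) * a"
    using x_eq by (metis mult.assoc)
  also have "\<dots> = x"
    using x2 x_eq by (metis mult.assoc)
  finally have x_idem: "x * x = x" .
  hence "a * b = x"
    unfolding x_def by (metis istar_idem istar_istar)
  with x_idem show ?thesis by simp
qed

lemma idem_commute:
  assumes e: "(e::'a) * e = e" and f: "f * f = f"
  shows "e * f = f * e"
proof -
  have ef: "e * f * (e * f) = e * f" and fe: "f * e * (f * e) = f * e"
    using idem_mult_idem e f by auto
  have "istar (e * f) = f * e"
    by (rule istar_eqI) (use ef fe in \<open>simp_all add: mult.assoc idem_assoc e f\<close>)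
  moreover have "istar (e * f) = e * f"
    using ef by (rule istar_idem)
  ultimately show ?thesis by simp
qed

lemma idem_commute_assoc:
  assumes "(e::'a) * e = e" "f * f = f"
  shows "e * (f * z) = f * (e * z)"
  using idem_commute[OF assms] by (metis mult.assoc)

lemma src_idem: "src (s::'a) * src s = src s"
  unfolding src_def using istar_inverse_assoc(4)[of s s] by (simp add: mult.assoc)

lemma range_idem: "(s::'a) * istar s * (s * istar s) = s * istar s"
  by (simp add: mult.assoc istar_inverse_assoc)

lemma istar_mult: "istar ((s::'a) * t) = istar t * istar s"
proof (rule istar_eqI)
  have "s * t * (istar t * istar s) * (s * t) = s * (t * istar t * src s) * t"
    by (simp add: mult.assoc src_def)
  also have "\<dots> = s * (src s * (t * istar t)) * t"
    using idem_commute[OF src_idem range_idem] by simp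
  also have "\<dots> = s * t"
    by (simp add: mult.assoc src_def istar_inverse_assoc)
  finally show "s * t * (istar t * istar s) * (s * t) = s * t" .
  have "istar t * istar s * (s * t) * (istar t * istar s)
      = istar t * (src s * (t * istar t)) * istar s"
    by (simp add: mult.assoc src_def)
  also have "\<dots> = istar t * (t * istar t * src s) * istar s"
    using idem_commute[OF src_idem range_idem] by simp
  also have "\<dots> = istar t * istar s"
    by (simp add: mult.assoc src_def istar_inverse_assoc)
  finally show "istar t * istar s * (s * t) * (istar t * istar s) = istar t * istar s" .
qed

lemma src_mult_idem:
  assumes e: "(e::'a) * e = e"
  shows "src (t * e) = src t * e"
proof -
  have "src (t * e) = e * (istar t * (t * e))"
    unfolding src_def using istar_mult[of t e] istar_idem[OF e] by (simp add: mult.assoc)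
  also have "\<dots> = istar t * (t * (e * e))"
    using idem_commute_assoc[OF e src_idem[unfolded src_def], of t e] by (simp add: mult.assoc)
  finally show ?thesis
    using e by (simp add: src_def mult.assoc)
qed

lemma ileq_src:
  assumes "ileq (a::'a) b"
  shows "a = b * src a" "src a = src b * src a"
proof -
  obtain e where e: "e * e = e" "a = b * e"
    using assms by (rule ileqE)
  have src_a: "src a = src b * e"
    using src_mult_idem e by simp
  show "a = b * src a"
    using src_a e by (simp add: src_def mult.assoc istar_inverse_assoc)
  show "src a = src b * src a"
    using src_a src_idem by (simp add: mult.assoc[symmetric])
qed

lemma ileq_refl: "ileq (a::'a) a"
  by (rule ileqI[OF src_idem[of a]]) (simp add: src_def istar_inverse_assoc)

lemma ileq_trans:
  assumes "ileq (a::'a) b" "ileq b c"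
  shows "ileq a c"
proof -
  obtain e f where e: "e * e = e" "a = b * e" and f: "f * f = f" "b = c * f"
    using assms by (meson ileqE)
  show ?thesis
    by (rule ileqI[OF idem_mult_idem[OF f(1) e(1)]]) (simp add: e f mult.assoc)
qed

lemma src_mono: "ileq (a::'a) b \<Longrightarrow> ileq (src a) (src b)"
  using ileq_src(2) src_idem ileqI by blast

lemma ileq_idem:
  assumes "ileq (a::'a) e" "e * e = e"
  shows "a * a = a" "e * a = a"
proof -
  obtain f where f: "f * f = f" "a = e * f"
    using assms(1) by (rule ileqE)
  show "a * a = a"
    using idem_mult_idem[OF assms(2) f(1)] f(2) by simp
  show "e * a = a"
    using f assms(2) by (simp add: idem_assoc)
qed

lemma ileq_istar:
  assumes "ileq (a::'a) b"
  shows "ileq (istar a) (istar b)"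
proof -
  obtain e where e: "e * e = e" "a = b * e"
    using assms by (rule ileqE)
  have "istar a = e * istar b"
    using e istar_mult istar_idem by simp
  also have "\<dots> = istar b * (b * e * istar b)"
    using idem_commute_assoc[OF e(1) src_idem[unfolded src_def], symmetric]
    by (simp add: mult.assoc istar_inverse_assoc)
  finally have "istar a = istar b * (b * e * istar b)" .
  moreover have "b * e * istar b * (b * e * istar b) = b * e * istar b"
    using e(1) idem_commute_assoc[OF e(1) src_idem[unfolded src_def]]
    by (simp add: mult.assoc istar_inverse_assoc idem_assoc)
  ultimately show ?thesis
    by (rule ileqI[rotated])
qed

lemma ileq_istar_iff: "ileq (istar (a::'a)) (istar b) \<longleftrightarrow> ileq a b"
  using ileq_istar istar_istar by metis

lemma src_eq_istar_mult:
  assumes "ileq (d::'a) z"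
  shows "src d = istar z * d"
proof -
  have "istar z * d = istar z * (z * src d)"
    using ileq_src(1)[OF assms] by simp
  also have "\<dots> = src z * src d"
    by (simp add: src_def mult.assoc)
  also have "\<dots> = src d"
    using ileq_src(2)[OF assms] by simp
  finally show ?thesis by simp
qed

lemma ileq_mult_idem:
  assumes e: "(e::'a) * e = e" and "ileq (src t) e"
  shows "ileq t (t * e)"
proof (rule ileqI[OF src_idem])
  have "t = t * src t"
    by (simp add: src_def istar_inverse_assoc)
  also have "\<dots> = t * e * src t"
    using ileq_idem(2)[OF assms(2) e] by (simp add: mult.assoc)
  finally show "t = t * e * src t" .
qed

lemma src_mult_idem_ileq: "(e::'a) * e = e \<Longrightarrow> ileq (src (t * e)) e"
  using ileqI[OF src_idem[of t]] src_mult_idem idem_commute[OF _ src_idem] by metis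

lemma ileq_of_src_ileq:
  assumes "ileq (s::'a) z" "ileq d z" "ileq (src s) (src d)"
  shows "ileq s d"
proof -
  have "s = z * src s"
    using ileq_src(1)[OF assms(1)] .
  also have "\<dots> = z * (src d * src s)"
    using ileq_idem(2)[OF assms(3) src_idem] by simp
  also have "\<dots> = d * src s"
    using ileq_src(1)[OF assms(2)] by (metis mult.assoc)
  finally show ?thesis
    using src_idem ileqI by blast
qed

lemma is_sup_istar:
  assumes "is_sup_in ileq UNIV (D::'a set) x"
  shows "is_sup_in ileq UNIV (istar ` D) (istar x)"
  using assms unfolding is_sup_in_def
  by (auto simp: ileq_istar) (metis ileq_istar_iff istar_istar)

lemma is_sup_mult_left:
  assumes sc: "sep_scott_cont TYPE('a)" and D: "directed_in ileq UNIV (D::'a set)"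
    and x: "is_sup_in ileq UNIV D x"
  shows "is_sup_in ileq UNIV ((\<lambda>d. v * d) ` D) (v * x)"
proof -
  have "directed_in ileq UNIV (istar ` D)"
    using D by (rule directed_in_image) (auto simp: ileq_istar)
  with sc is_sup_istar[OF x]
  have "is_sup_in ileq UNIV ((\<lambda>d. d * istar v) ` istar ` D) (istar x * istar v)"
    unfolding sep_scott_cont_def by blast
  from is_sup_istar[OF this] show ?thesis
    by (simp add: image_image istar_mult)
qed

lemma is_sup_src_image:
  assumes sc: "sep_scott_cont TYPE('a)" and D: "directed_in ileq UNIV (D::'a set)"
    and z: "is_sup_in ileq UNIV D z"
  shows "is_sup_in ileq idems (src ` D) (src z)"
proof -
  have "src ` D = (\<lambda>d. istar z * d) ` D"
    using z src_eq_istar_mult unfolding is_sup_in_def by (intro image_cong) auto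
  then have "is_sup_in ileq UNIV (src ` D) (src z)"
    using is_sup_mult_left[OF sc D z, of "istar z"] by (simp add: src_def)
  then show ?thesis
    by (rule is_sup_in_subset) (auto simp: idems_def src_idem)
qed

lemma mirror_is_sup:
  assumes mirror: "mirror_semigroup TYPE('a)"
    and D: "directed_in ileq idems (D::'a set)" and z: "is_sup_in ileq idems D z"
  shows "is_sup_in ileq UNIV D z"
proof -
  obtain x where x: "is_sup_in ileq UNIV D x"
    using mirror D z unfolding mirror_semigroup_def has_sup_in_def by blast
  have z_idem: "z * z = z"
    using z unfolding is_sup_in_def idems_def by auto
  have "ileq x z"
    using x z unfolding is_sup_in_def by auto
  then have "x \<in> idems"
    using ileq_idem(1)[OF _ z_idem] unfolding idems_def by blast
  then have "ileq z x"
    using x z unfolding is_sup_in_def by auto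
  with x z show ?thesis
    unfolding is_sup_in_def by (blast intro: ileq_trans)
qed

lemma way_below_imp_ileq: "way_below_in ileq UNIV (s::'a) t \<Longrightarrow> ileq s t"
  unfolding way_below_in_def
  by (erule allE[of _ "{t}"], erule allE[of _ t])
    (auto simp: directed_in_def is_sup_in_def ileq_refl)

lemma way_below_imp_src_way_below:
  assumes mirror: "mirror_semigroup TYPE('a)" and sc: "sep_scott_cont TYPE('a)"
    and wb: "way_below_in ileq UNIV (s::'a) t"
  shows "way_below_in ileq idems (src s) (src t)"
  unfolding way_below_in_def
proof (intro allI impI)
  fix D z
  assume D: "directed_in ileq idems D" and z: "is_sup_in ileq idems D z"
    and tz: "ileq (src t) z"
  have D_UNIV: "directed_in ileq UNIV D"
    using D unfolding directed_in_def by auto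
  have "is_sup_in ileq UNIV ((\<lambda>d. t * d) ` D) (t * z)"
    using is_sup_mult_left[OF sc D_UNIV mirror_is_sup[OF mirror D z]] .
  moreover have "directed_in ileq UNIV ((\<lambda>d. t * d) ` D)"
    using D_UNIV by (rule directed_in_image) (auto elim!: ileqE intro: ileqI simp: mult.assoc)
  moreover have "ileq t (t * z)"
    using z tz ileq_mult_idem unfolding is_sup_in_def idems_def by blast
  ultimately obtain e where e: "e \<in> D" "ileq s (t * e)"
    using wb unfolding way_below_in_def by blast
  have "e * e = e"
    using e D unfolding directed_in_def idems_def by auto
  then have "ileq (src s) e"
    using ileq_trans src_mono[OF e(2)] src_mult_idem_ileq by blast
  with e(1) show "\<exists>d\<in>D. ileq (src s) d" ..
qed

lemma src_way_below_imp_way_below: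
  assumes sc: "sep_scott_cont TYPE('a)"
    and st: "ileq (s::'a) t" and wb: "way_below_in ileq idems (src s) (src t)"
  shows "way_below_in ileq UNIV s t"
  unfolding way_below_in_def
proof (intro allI impI)
  fix D z
  assume D: "directed_in ileq UNIV D" and z: "is_sup_in ileq UNIV D z" and tz: "ileq t z"
  have "directed_in ileq idems (src ` D)"
    using D by (rule directed_in_image) (auto simp: src_mono idems_def src_idem)
  moreover have "ileq (src t) (src z)"
    using src_mono[OF tz] .
  ultimately obtain d where d: "d \<in> D" "ileq (src s) (src d)"
    using wb is_sup_src_image[OF sc D z] unfolding way_below_in_def by blast
  have "ileq d z"
    using d(1) z unfolding is_sup_in_def by auto
  with d show "\<exists>d\<in>D. ileq s d"
    using ileq_of_src_ileq ileq_trans[OF st tz] by blast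
qed

end

theorem lemma4p4:
  fixes s t :: "'a::semigroup_mult"
  assumes "inverse_semigroup TYPE('a)"
    and "mirror_semigroup TYPE('a)"
    and "sep_scott_cont TYPE('a)"
  shows "way_below_in ileq UNIV s t \<longleftrightarrow>
           (ileq s t \<and> way_below_in ileq idems (src s) (src t))"
  using way_below_imp_ileq[OF assms(1)] way_below_imp_src_way_below[OF assms]
    src_way_below_imp_way_below[OF assms(1,3)]
  by blast

end
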